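(* Let $\mathbf a=(a_1,\dots,a_k)$ be a sequence of nonnegative integers with $\sum_i a_i=n$. Then for every $\lambda\in\mathbb C$, \[ \left|\Phi_{\mathbf a}^{-1}(D(\mathbf a))\right|=\sum_{\mathbf 0\le \mathbf b\le \mathbf a}(-1)^{\sum_j b_j}\, f_\lambda\Big(n-\sum_j b_j\Big)\prod_{i=1}^k\binom{a_i}{b_i} f_\lambda(b_i), \] where the sum is over all integer vectors $\mathbf b=(b_1,\dots,b_k)$ with $0\le b_i\le a_i$ for all $i$.
   Context: For $\mathbf a=(a_1,\dots,a_k)$ with nonnegative integer entries summing to $n$, put $c_0=0$, $c_j=a_1+\dots+a_j$, and let the $j$-th block be $A_j=\{c_{j-1}+1,\dots,c_j\}$. Let $S_{\mathbf a}\subseteq S_n$ be the set of permutations $\pi$ of $[n]$ with $\pi_i>\pi_{i+1}$ whenever $i,i+1$ lie in the same block. $D(\mathbf a)$ is the set of derangements (permutations with no $i$ such that $\pi_i=i$) in $S_{\mathbf a}$. The map $\Phi_{\mathbf a}:S_n\to S_{\mathbf a}$ sorts the entries in each block into decreasing order (keeping the set of entries in each block); so $\Phi_{\mathbf a}^{-1}(D(\mathbf a))$ is the set of permutations of $[n]$ which become derangements after this sorting. For $\lambda\in\mathbb C$ and $m\ge 0$, $f_\lambda(m)=\sum_{\pi\in S_m}\lambda^{\mathrm{fix}(\pi)}$, where $\mathrm{fix}(\pi)$ is the number of fixed points of $\pi$ (so $f_\lambda(0)=1$, $f_1(m)=m!$, and $f_0(m)$ is the number of derangements of $[m]$). *)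

theory Defs
  imports Complex_Main "HOL-Combinatorics.Permutations"
begin

text \<open>Compositions a are nat lists (a_1,...,a_k); blocks are 0-indexed here:
  block j (j < length a) is {c_j + 1 .. c_(j+1)} with c_j = a_1 + ... + a_j.\<close>

definition blk :: "nat list \<Rightarrow> nat \<Rightarrow> nat set" where
  "blk a j = {sum_list (take j a) + 1 .. sum_list (take (Suc j) a)}"

definition S_a :: "nat list \<Rightarrow> (nat \<Rightarrow> nat) set" where
  "S_a a = {p. p permutes {1..sum_list a} \<and>
     (\<forall>i. (\<exists>j<length a. i \<in> blk a j \<and> Suc i \<in> blk a j) \<longrightarrow> p i > p (Suc i))}"

definition derangement_on :: "nat \<Rightarrow> (nat \<Rightarrow> nat) \<Rightarrow> bool" where
  "derangement_on n p \<longleftrightarrow> (\<forall>i\<in>{1..n}. p i \<noteq> i)"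

definition D_a :: "nat list \<Rightarrow> (nat \<Rightarrow> nat) set" where
  "D_a a = {p \<in> S_a a. derangement_on (sum_list a) p}"

text \<open>Phi_a: sort the entries of each block into decreasing order.
  Position c_j + t (1 \<le> t \<le> a_(j+1)) receives the t-th largest element of p ` (block j).\<close>
definition Phi :: "nat list \<Rightarrow> (nat \<Rightarrow> nat) \<Rightarrow> (nat \<Rightarrow> nat)" where
  "Phi a p i = (if \<exists>j<length a. i \<in> blk a j
     then (let j = (THE j. j < length a \<and> i \<in> blk a j)
           in rev (sorted_list_of_set (p ` blk a j)) ! (i - sum_list (take j a) - 1))
     else i)"

definition f_lam :: "complex \<Rightarrow> nat \<Rightarrow> complex" where
  "f_lam lam m = (\<Sum>p\<in>{p. p permutes {1..m}}. lam ^ card {i\<in>{1..m}. p i = i})"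

end

theory Submission
  imports Defs
begin

text \<open>After sorting, block \<open>j\<close> holds the values \<open>p(A_j)\<close> in decreasing order, so it contains a fixed
  point iff some value \<open>y\<close> of \<open>p(A_j)\<close> equals \<open>c_{j-1} + 1 +\<close> (number of larger values in \<open>p(A_j)\<close>);
  along a decreasing block there is at most one such value. Deleting this value from every block
  that has one (and remembering which of the \<open>a_j\<close> positions carried it) shows that the number
  \<open>L(a)\<close> of permutations without such a block satisfies
  \<open>\<Sum>e\<in>{0,1}^k. (\<Prod>j. a_j^e_j) L(a - e) = n!\<close>, a recurrence determining \<open>L\<close> by induction on \<open>n\<close>.
  The right-hand side satisfies the same recurrence for every \<open>\<lambda>\<close>: block by block, the two
  choices of \<open>e_j\<close> combine via \<open>f(m+1) = (m+1) f(m) + (\<lambda> - 1)^(m+1)\<close> into a binomial sum,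
  and the multivariate Vandermonde identity reduces everything to
  \<open>\<Sum>j. C(n,j) (1 - \<lambda>)^j f(n - j) = n!\<close>.\<close>

section \<open>Blocks of a composition\<close>

definition block_start :: "nat list \<Rightarrow> nat \<Rightarrow> nat" where
  "block_start a j = sum_list (take j a)"

lemma blk_eq_block_start: "blk a j = {block_start a j + 1 .. block_start a (Suc j)}"
  by (simp add: blk_def block_start_def)

lemma block_start_0 [simp]: "block_start a 0 = 0"
  by (simp add: block_start_def)

lemma block_start_Suc: "j < length a \<Longrightarrow> block_start a (Suc j) = block_start a j + a!j"
  by (simp add: block_start_def take_Suc_conv_app_nth)

lemma block_start_Cons_Suc [simp]: "block_start (y#a) (Suc j) = y + block_start a j"
  by (simp add: block_start_def)

lemma block_start_length: "length a \<le> j \<Longrightarrow> block_start a j = sum_list a"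
  by (simp add: block_start_def)

lemma block_start_mono:
  assumes "j \<le> j'"
  shows "block_start a j \<le> block_start a j'"
proof -
  have "take j' a = take j a @ drop j (take j' a)"
    using assms by (metis append_take_drop_id min.absorb1 take_take)
  then show ?thesis
    unfolding block_start_def by (metis le_add1 sum_list_append)
qed

lemma finite_blk [simp]: "finite (blk a j)"
  by (simp add: blk_eq_block_start)

lemma card_blk: "j < length a \<Longrightarrow> card (blk a j) = a!j"
  by (simp add: blk_eq_block_start block_start_Suc)

lemma blk_Cons_0: "blk (y#a) 0 = {1..y}"
  by (simp add: blk_def)

lemma blk_Cons_Suc: "blk (y#a) (Suc j) = {y + block_start a j + 1 .. y + block_start a (Suc j)}"
  by (simp add: blk_def block_start_def)

lemma blk_disjoint:
  assumes "j < j'" "x \<in> blk a j"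
  shows "x \<notin> blk a j'"
proof -
  have "block_start a (Suc j) \<le> block_start a j'"
    using assms(1) by (simp add: block_start_mono)
  then show ?thesis
    using assms(2) by (auto simp: blk_eq_block_start)
qed

lemma blk_unique: "x \<in> blk a j \<Longrightarrow> x \<in> blk a j' \<Longrightarrow> j = j'"
  by (metis blk_disjoint linorder_neqE_nat)

lemma blk_subset:
  assumes "j < length a"
  shows "blk a j \<subseteq> {1..sum_list a}"
proof -
  have "block_start a (Suc j) \<le> block_start a (length a)"
    using assms by (simp add: block_start_mono)
  then show ?thesis
    by (auto simp: blk_eq_block_start block_start_length)
qed

lemma ex_blk: "x \<in> {1..sum_list a} \<Longrightarrow> \<exists>j<length a. x \<in> blk a j"
proof (induction a arbitrary: x)
  case Nil
  then show ?case by simp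
next
  case (Cons y a)
  show ?case
  proof (cases "x \<le> y")
    case True
    then show ?thesis
      using Cons.prems by (intro exI[of _ 0]) (auto simp: blk_Cons_0)
  next
    case False
    then have "x - y \<in> {1..sum_list a}"
      using Cons.prems by auto
    then obtain j where "j < length a" "x - y \<in> blk a j"
      using Cons.IH by blast
    then show ?thesis
      using False by (intro exI[of _ "Suc j"]) (auto simp: blk_Cons_Suc blk_eq_block_start)
  qed
qed

section \<open>Sorting a block\<close>

definition rank_above :: "'a::linorder set \<Rightarrow> 'a \<Rightarrow> nat" where
  "rank_above V y = card {z\<in>V. y < z}"

lemma rank_above_less_card: "finite V \<Longrightarrow> y \<in> V \<Longrightarrow> rank_above V y < card V"
  unfolding rank_above_def by (rule psubset_card_mono) auto

lemma rank_above_antimono: "finite V \<Longrightarrow> y \<le> z \<Longrightarrow> rank_above V z \<le> rank_above V y"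
  unfolding rank_above_def by (rule card_mono) auto

lemma rank_above_strict_antimono:
  "finite V \<Longrightarrow> z \<in> V \<Longrightarrow> y < z \<Longrightarrow> rank_above V z < rank_above V y"
  unfolding rank_above_def by (rule psubset_card_mono) auto

lemma strict_sorted_nth_less_iff:
  fixes xs :: "'a::linorder list"
  assumes "sorted_wrt (<) xs" "i < length xs" "j < length xs"
  shows "xs!i < xs!j \<longleftrightarrow> i < j"
  using sorted_wrt_nth_less[OF assms(1) _ assms(3)] sorted_wrt_nth_less[OF assms(1) _ assms(2)]
  by (cases i j rule: linorder_cases) (auto dest: less_asym)

lemma rank_above_sorted_nth:
  assumes "finite V" "s < card V"
  shows "rank_above V (sorted_list_of_set V ! s) = card V - Suc s"
proof -
  let ?xs = "sorted_list_of_set V"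
  have sorted: "sorted_wrt (<) ?xs"
    by (rule strict_sorted_list_of_set)
  have len: "length ?xs = card V"
    by simp
  have "{z\<in>V. ?xs!s < z} = (\<lambda>r. ?xs!r) ` {s<..<card V}"
  proof
    show "{z\<in>V. ?xs!s < z} \<subseteq> (\<lambda>r. ?xs!r) ` {s<..<card V}"
    proof
      fix z assume z: "z \<in> {z\<in>V. ?xs!s < z}"
      then obtain r where "r < card V" "z = ?xs!r"
        using assms by (metis in_set_conv_nth len mem_Collect_eq set_sorted_list_of_set)
      then show "z \<in> (\<lambda>r. ?xs!r) ` {s<..<card V}"
        using strict_sorted_nth_less_iff[OF sorted] assms z by auto
    qed
  next
    show "(\<lambda>r. ?xs!r) ` {s<..<card V} \<subseteq> {z\<in>V. ?xs!s < z}"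
      using strict_sorted_nth_less_iff[OF sorted] assms nth_mem[of _ ?xs] by auto
  qed
  moreover have "inj_on (\<lambda>r. ?xs!r) {s<..<card V}"
    by (auto simp: inj_on_def nth_eq_iff_index_eq)
  ultimately show ?thesis
    unfolding rank_above_def by (simp add: card_image)
qed

lemma nth_rev_sorted_list_of_set_eq_iff:
  assumes "finite V" "t < card V"
  shows "rev (sorted_list_of_set V) ! t = y \<longleftrightarrow> y \<in> V \<and> rank_above V y = t"
proof -
  let ?xs = "sorted_list_of_set V"
  have rev_nth: "rev ?xs ! t = ?xs ! (card V - Suc t)"
    using assms by (simp add: rev_nth)
  show ?thesis
  proof
    assume y: "rev ?xs ! t = y"
    have "card V - Suc t < card V"
      using assms by simp
    then show "y \<in> V \<and> rank_above V y = t"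
      using rank_above_sorted_nth[OF assms(1)] nth_mem[of "card V - Suc t" ?xs] rev_nth y assms
      by auto
  next
    assume y: "y \<in> V \<and> rank_above V y = t"
    then obtain s where s: "s < card V" "y = ?xs!s"
      using assms by (metis in_set_conv_nth length_sorted_list_of_set set_sorted_list_of_set)
    moreover have "card V - Suc s = t"
      using rank_above_sorted_nth[OF assms(1) s(1)] s y by simp
    ultimately have "s = card V - Suc t"
      by linarith
    then show "rev ?xs ! t = y"
      using rev_nth s by simp
  qed
qed

text \<open>\<open>sort_fixes c V y\<close>: when the set \<open>V\<close> is written in decreasing order into the positions
  \<open>c + 1, c + 2, \<dots>\<close>, the entry \<open>y\<close> lands on position \<open>y\<close>.\<close>

definition sort_fixes :: "nat \<Rightarrow> nat set \<Rightarrow> nat \<Rightarrow> bool" where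
  "sort_fixes c V y \<longleftrightarrow> y \<in> V \<and> y = c + 1 + rank_above V y"

definition fixed_block :: "nat list \<Rightarrow> (nat \<Rightarrow> nat) \<Rightarrow> nat \<Rightarrow> bool" where
  "fixed_block a p j \<longleftrightarrow> (\<exists>y. sort_fixes (block_start a j) (p ` blk a j) y)"

text \<open>Along a decreasing sequence of positions the entries strictly decrease, so at most one
  of them can be fixed.\<close>

lemma sort_fixes_unique:
  assumes "finite V" "sort_fixes c V y1" "sort_fixes c V y2"
  shows "y1 = y2"
proof (rule ccontr)
  assume "y1 \<noteq> y2"
  then consider "y1 < y2" | "y2 < y1"
    by linarith
  then show False
    using assms rank_above_strict_antimono[OF assms(1), of y1 y2]
      rank_above_strict_antimono[OF assms(1), of y2 y1]
    by cases (auto simp: sort_fixes_def)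
qed

lemma card_image_blk:
  assumes "p permutes {1..sum_list a}" "j < length a"
  shows "card (p ` blk a j) = a!j"
  using card_image[OF inj_on_subset[OF permutes_inj[OF assms(1)] subset_UNIV]] card_blk[OF assms(2)]
  by simp

lemma image_blk_unique:
  assumes "p permutes {1..sum_list a}" "y \<in> p ` blk a j" "y \<in> p ` blk a j'"
  shows "j = j'"
  using assms blk_unique by (auto dest: injD[OF permutes_inj])

lemma Phi_on_blk:
  assumes "j < length a" "x \<in> blk a j"
  shows "Phi a p x = rev (sorted_list_of_set (p ` blk a j)) ! (x - block_start a j - 1)"
proof -
  have "(THE j. j < length a \<and> x \<in> blk a j) = j"
    using assms blk_unique by (intro the_equality) auto
  then show ?thesis
    using assms unfolding Phi_def by (auto simp: block_start_def Let_def)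
qed

lemma Phi_outside:
  assumes "x \<notin> {1..sum_list a}"
  shows "Phi a p x = x"
proof -
  have "\<not> (\<exists>j<length a. x \<in> blk a j)"
    using assms blk_subset by blast
  then show ?thesis
    unfolding Phi_def by (simp only: if_False)
qed

lemma Phi_eq_iff:
  assumes "p permutes {1..sum_list a}" "j < length a" "x \<in> blk a j"
  shows "Phi a p x = y \<longleftrightarrow>
    y \<in> p ` blk a j \<and> rank_above (p ` blk a j) y = x - block_start a j - 1"
proof -
  have "x - block_start a j - 1 < card (p ` blk a j)"
    using assms card_image_blk[OF assms(1,2)] by (auto simp: blk_eq_block_start block_start_Suc)
  then show ?thesis
    unfolding Phi_on_blk[OF assms(2,3)] by (intro nth_rev_sorted_list_of_set_eq_iff) simp
qed

lemma Phi_in_image_blk: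
  assumes "p permutes {1..sum_list a}" "j < length a" "x \<in> blk a j"
  shows "Phi a p x \<in> p ` blk a j"
    and "rank_above (p ` blk a j) (Phi a p x) = x - block_start a j - 1"
  using Phi_eq_iff[OF assms, of "Phi a p x"] by auto

lemma Phi_permutes:
  assumes p: "p permutes {1..sum_list a}"
  shows "Phi a p permutes {1..sum_list a}"
proof (rule bij_imp_permutes)
  let ?S = "{1..sum_list a}"
  have into: "Phi a p ` ?S \<subseteq> ?S"
  proof
    fix y assume "y \<in> Phi a p ` ?S"
    then obtain x j where "y = Phi a p x" "j < length a" "x \<in> blk a j"
      using ex_blk by blast
    then show "y \<in> ?S"
      using Phi_in_image_blk(1)[OF p] blk_subset permutes_image[OF p] by blast
  qed
  have inj: "inj_on (Phi a p) ?S"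
  proof
    fix x1 x2 assume x: "x1 \<in> ?S" "x2 \<in> ?S" and eq: "Phi a p x1 = Phi a p x2"
    obtain j1 j2 where j: "j1 < length a" "x1 \<in> blk a j1" "j2 < length a" "x2 \<in> blk a j2"
      using ex_blk x by meson
    then have "j1 = j2"
      using Phi_in_image_blk(1)[OF p] eq image_blk_unique[OF p] by metis
    then have "x1 - block_start a j1 - 1 = x2 - block_start a j1 - 1"
      using Phi_in_image_blk(2)[OF p] j eq by metis
    then show "x1 = x2"
      using j \<open>j1 = j2\<close> by (auto simp: blk_eq_block_start)
  qed
  show "bij_betw (Phi a p) ?S ?S"
    using endo_inj_surj[OF _ into inj] inj by (simp add: bij_betw_def)
qed (rule Phi_outside)

lemma Phi_in_S_a:
  assumes p: "p permutes {1..sum_list a}"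
  shows "Phi a p \<in> S_a a"
  unfolding S_a_def
proof (intro CollectI conjI allI impI Phi_permutes[OF p])
  fix i assume "\<exists>j<length a. i \<in> blk a j \<and> Suc i \<in> blk a j"
  then obtain j where j: "j < length a" "i \<in> blk a j" "Suc i \<in> blk a j"
    by blast
  have "rank_above (p ` blk a j) (Phi a p i) < rank_above (p ` blk a j) (Phi a p (Suc i))"
    using Phi_in_image_blk(2)[OF p j(1)] j by (auto simp: blk_eq_block_start)
  then show "Phi a p (Suc i) < Phi a p i"
    using rank_above_antimono[of "p ` blk a j"] by (meson finite_blk finite_imageI leD not_le)
qed

lemma derangement_Phi_iff:
  assumes p: "p permutes {1..sum_list a}"
  shows "derangement_on (sum_list a) (Phi a p) \<longleftrightarrow> (\<forall>j<length a. \<not> fixed_block a p j)"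
proof -
  have "(\<exists>x\<in>blk a j. Phi a p x = x) \<longleftrightarrow> fixed_block a p j" if j: "j < length a" for j
  proof
    assume "\<exists>x\<in>blk a j. Phi a p x = x"
    then obtain x where x: "x \<in> blk a j" "Phi a p x = x"
      by blast
    then have "x \<in> p ` blk a j" "rank_above (p ` blk a j) x = x - block_start a j - 1"
      using Phi_eq_iff[OF p j x(1)] by auto
    then have "sort_fixes (block_start a j) (p ` blk a j) x"
      using x(1) by (auto simp: sort_fixes_def blk_eq_block_start)
    then show "fixed_block a p j"
      by (auto simp: fixed_block_def)
  next
    assume "fixed_block a p j"
    then obtain y where y: "y \<in> p ` blk a j" "y = block_start a j + 1 + rank_above (p ` blk a j) y"
      by (auto simp: fixed_block_def sort_fixes_def)
    then have "rank_above (p ` blk a j) y < a!j"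
      using rank_above_less_card[of "p ` blk a j" y] card_image_blk[OF p j] by simp
    then have "y \<in> blk a j"
      using y j by (auto simp: blk_eq_block_start block_start_Suc)
    then show "\<exists>x\<in>blk a j. Phi a p x = x"
      using Phi_eq_iff[OF p j] y by auto
  qed
  then show ?thesis
    unfolding derangement_on_def using ex_blk blk_subset by blast
qed

lemma Phi_in_D_a_iff:
  "{p. p permutes {1..sum_list a} \<and> Phi a p \<in> D_a a} =
   {p. p permutes {1..sum_list a} \<and> (\<forall>j<length a. \<not> fixed_block a p j)}"
  using Phi_in_S_a derangement_Phi_iff unfolding D_a_def by blast

section \<open>Deleting a fixed entry\<close>

definition collapse :: "nat \<Rightarrow> nat \<Rightarrow> nat" where
  "collapse f v = (if v < f then v else v - 1)"

definition expand :: "nat \<Rightarrow> nat \<Rightarrow> nat" where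
  "expand f v = (if v < f then v else Suc v)"

lemma collapse_expand [simp]: "collapse f (expand f v) = v"
  by (simp add: collapse_def expand_def)

lemma expand_collapse: "v \<noteq> f \<Longrightarrow> expand f (collapse f v) = v"
  by (auto simp: collapse_def expand_def)

lemma expand_neq [simp]: "expand f v \<noteq> f" "f \<noteq> expand f v"
  by (simp_all add: expand_def)

lemma collapse_less_iff: "y \<noteq> f \<Longrightarrow> z \<noteq> f \<Longrightarrow> collapse f y < collapse f z \<longleftrightarrow> y < z"
  by (auto simp: collapse_def)

lemma collapse_eq_iff: "y \<noteq> f \<Longrightarrow> z \<noteq> f \<Longrightarrow> collapse f y = collapse f z \<longleftrightarrow> y = z"
  by (auto simp: collapse_def)

lemma expand_eq_iff: "expand f y = expand f z \<longleftrightarrow> y = z"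
  by (auto simp: expand_def)

lemma expand_range: "x \<in> {1..n} \<Longrightarrow> q \<in> {1..n-1} \<Longrightarrow> expand x q \<in> {1..n}"
  by (auto simp: expand_def)

lemma collapse_range: "x \<in> {1..n} \<Longrightarrow> q \<in> {1..n} \<Longrightarrow> q \<noteq> x \<Longrightarrow> collapse x q \<in> {1..n-1}"
  by (auto simp: collapse_def)

lemma inj_on_collapse: "f \<notin> A \<Longrightarrow> inj_on (collapse f) A"
  unfolding inj_on_def using collapse_eq_iff by metis

lemma sum_list_decr:
  fixes a :: "nat list"
  assumes "i < length a" "1 \<le> a!i"
  shows "sum_list (a[i := a!i - 1]) = sum_list a - 1"
  using sum_list_update[OF assms(1), of "a!i - 1"] elem_le_sum_list[OF assms(1)] assms by simp

lemma block_start_decr: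
  assumes "i < length a" "1 \<le> a!i"
  shows "block_start (a[i := a!i - 1]) j = (if j \<le> i then block_start a j else block_start a j - 1)"
proof (cases "j \<le> i")
  case True
  then show ?thesis
    by (simp add: block_start_def take_update_cancel)
next
  case False
  then have "block_start (a[i := a!i - 1]) j = sum_list ((take j a)[i := a!i - 1])"
    by (simp add: block_start_def take_update_swap)
  also have "\<dots> = block_start a j - 1"
    using False assms by (subst sum_list_update) (auto simp: block_start_def)
  finally show ?thesis
    using False by simp
qed

lemma blk_decr_iff:
  assumes i: "i < length a" "1 \<le> a!i" and x: "x \<in> blk a i" and j: "j < length a"
  shows "q \<in> blk (a[i := a!i - 1]) j \<longleftrightarrow> expand x q \<in> blk a j"
proof -
  let ?a' = "a[i := a!i - 1]"
  have x_bounds: "block_start a i + 1 \<le> x" "x \<le> block_start a i + a!i"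
    using x i by (auto simp: blk_eq_block_start block_start_Suc)
  have blk_j: "blk a j = {block_start a j + 1 .. block_start a j + a!j}"
    using j by (simp add: blk_eq_block_start block_start_Suc)
  have blk'_j: "blk ?a' j = {block_start ?a' j + 1 .. block_start ?a' j + ?a'!j}"
    using j by (simp add: blk_eq_block_start block_start_Suc)
  consider "j < i" | "j = i" | "i < j"
    by linarith
  then show ?thesis
  proof cases
    case 1
    have "block_start a (Suc j) \<le> block_start a i"
      using 1 by (simp add: block_start_mono)
    moreover have "block_start ?a' j = block_start a j" "?a'!j = a!j"
      using 1 block_start_decr[OF i, of j] by auto
    ultimately show ?thesis
      using blk_j blk'_j x_bounds j by (auto simp: expand_def block_start_Suc)
  next
    case 2
    have "block_start ?a' j = block_start a j" "?a'!j = a!j - 1"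
      using 2 i block_start_decr[OF i, of j] by auto
    then show ?thesis
      using blk_j blk'_j x_bounds 2 by (auto simp: expand_def)
  next
    case 3
    have "block_start a (Suc i) \<le> block_start a j"
      using 3 by (simp add: block_start_mono)
    moreover have "block_start ?a' j = block_start a j - 1" "?a'!j = a!j"
      using 3 block_start_decr[OF i, of j] by auto
    ultimately show ?thesis
      using blk_j blk'_j x_bounds i by (auto simp: expand_def block_start_Suc)
  qed
qed

lemma expand_image_blk_decr:
  assumes "i < length a" "1 \<le> a!i" "x \<in> blk a i" "j < length a"
  shows "expand x ` blk (a[i := a!i - 1]) j = blk a j - {x}"
proof
  show "expand x ` blk (a[i := a!i - 1]) j \<subseteq> blk a j - {x}"
    using blk_decr_iff[OF assms] by auto
  show "blk a j - {x} \<subseteq> expand x ` blk (a[i := a!i - 1]) j"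
  proof
    fix v assume v: "v \<in> blk a j - {x}"
    then have "collapse x v \<in> blk (a[i := a!i - 1]) j"
      using blk_decr_iff[OF assms, of "collapse x v"] by (simp add: expand_collapse)
    then show "v \<in> expand x ` blk (a[i := a!i - 1]) j"
      using v by (force simp: expand_collapse)
  qed
qed

definition remove_point :: "nat \<Rightarrow> nat \<Rightarrow> nat \<Rightarrow> (nat \<Rightarrow> nat) \<Rightarrow> nat \<Rightarrow> nat" where
  "remove_point n x f p q = (if q \<in> {1..n-1} then collapse f (p (expand x q)) else q)"

definition insert_point :: "nat \<Rightarrow> nat \<Rightarrow> nat \<Rightarrow> (nat \<Rightarrow> nat) \<Rightarrow> nat \<Rightarrow> nat" where
  "insert_point n x f p' q =
    (if q = x then f else if q \<in> {1..n} then expand f (p' (collapse x q)) else q)"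

lemma insert_point_at [simp]: "insert_point n x f p' x = f"
  by (simp add: insert_point_def)

lemma remove_point_permutes:
  assumes p: "p permutes {1..n}" and x: "x \<in> {1..n}" and f: "p x = f"
  shows "remove_point n x f p permutes {1..n-1}"
proof (rule bij_imp_permutes)
  let ?S = "{1..n-1}"
  have inj_p: "inj p"
    using p by (rule permutes_inj)
  have f_range: "f \<in> {1..n}"
    using permutes_in_image[OF p] x f by blast
  have neq_f: "p (expand x q) \<noteq> f" for q
    using inj_p f by (metis injD expand_neq(1))
  have into: "remove_point n x f p ` ?S \<subseteq> ?S"
  proof
    fix y assume "y \<in> remove_point n x f p ` ?S"
    then obtain q where q: "q \<in> ?S" "y = collapse f (p (expand x q))"
      by (auto simp: remove_point_def)
    then have "p (expand x q) \<in> {1..n}"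
      using permutes_in_image[OF p] expand_range[OF x] by blast
    then show "y \<in> ?S"
      using collapse_range[OF f_range] neq_f q by blast
  qed
  have inj: "inj_on (remove_point n x f p) ?S"
  proof
    fix q1 q2 assume "q1 \<in> ?S" "q2 \<in> ?S" "remove_point n x f p q1 = remove_point n x f p q2"
    then have "p (expand x q1) = p (expand x q2)"
      using collapse_eq_iff[OF neq_f neq_f] by (simp add: remove_point_def)
    then show "q1 = q2"
      using inj_p by (simp add: inj_eq expand_eq_iff)
  qed
  show "bij_betw (remove_point n x f p) ?S ?S"
    using endo_inj_surj[OF _ into inj] inj by (simp add: bij_betw_def)
qed (auto simp: remove_point_def)

lemma insert_point_permutes:
  assumes p': "p' permutes {1..n-1}" and x: "x \<in> {1..n}" and f: "f \<in> {1..n}"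
  shows "insert_point n x f p' permutes {1..n}"
proof (rule bij_imp_permutes)
  let ?S = "{1..n}"
  have inj_p': "inj p'"
    using p' by (rule permutes_inj)
  have into: "insert_point n x f p' ` ?S \<subseteq> ?S"
  proof
    fix y assume "y \<in> insert_point n x f p' ` ?S"
    then obtain q where q: "q \<in> ?S" "y = insert_point n x f p' q"
      by blast
    show "y \<in> ?S"
    proof (cases "q = x")
      case False
      then have "p' (collapse x q) \<in> {1..n-1}"
        using permutes_in_image[OF p'] collapse_range[OF x q(1)] by blast
      then show ?thesis
        using q False expand_range[OF f] by (simp add: insert_point_def)
    qed (use q f in \<open>simp add: insert_point_def\<close>)
  qed
  have inj: "inj_on (insert_point n x f p') ?S"
  proof
    fix q1 q2 assume q: "q1 \<in> ?S" "q2 \<in> ?S" "insert_point n x f p' q1 = insert_point n x f p' q2"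
    show "q1 = q2"
    proof (cases "q1 = x"; cases "q2 = x")
      assume "q1 \<noteq> x" "q2 \<noteq> x"
      then have "collapse x q1 = collapse x q2"
        using q inj_p' by (simp add: insert_point_def expand_eq_iff inj_eq)
      then show "q1 = q2"
        using \<open>q1 \<noteq> x\<close> \<open>q2 \<noteq> x\<close> collapse_eq_iff by blast
    qed (use q in \<open>auto simp: insert_point_def\<close>)
  qed
  show "bij_betw (insert_point n x f p') ?S ?S"
    using endo_inj_surj[OF _ into inj] inj by (simp add: bij_betw_def)
qed (use x in \<open>auto simp: insert_point_def\<close>)

lemma remove_insert_point:
  assumes p': "p' permutes {1..n-1}" and x: "x \<in> {1..n}"
  shows "remove_point n x f (insert_point n x f p') = p'"
proof
  fix q
  show "remove_point n x f (insert_point n x f p') q = p' q"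
  proof (cases "q \<in> {1..n-1}")
    case True
    then show ?thesis
      using expand_range[OF x True] by (simp add: remove_point_def insert_point_def)
  next
    case False
    then show ?thesis
      using p' by (auto simp: remove_point_def permutes_not_in)
  qed
qed

lemma insert_remove_point:
  assumes p: "p permutes {1..n}" and x: "x \<in> {1..n}" and f: "p x = f"
  shows "insert_point n x f (remove_point n x f p) = p"
proof
  fix q
  show "insert_point n x f (remove_point n x f p) q = p q"
  proof (cases "q = x \<or> q \<notin> {1..n}")
    case True
    then show ?thesis
      using f p by (auto simp: insert_point_def permutes_not_in)
  next
    case False
    then have "p q \<noteq> f"
      using f permutes_inj[OF p] by (metis injD)
    then show ?thesis
      using False collapse_range[OF x] by (simp add: insert_point_def remove_point_def expand_collapse)
  qed
qed

lemma remove_point_image_blk: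
  assumes p: "p permutes {1..sum_list a}" and i: "i < length a" "1 \<le> a!i"
    and x: "x \<in> blk a i" and f: "p x = f" and j: "j < length a"
  shows "remove_point (sum_list a) x f p ` blk (a[i := a!i - 1]) j = collapse f ` (p ` blk a j - {f})"
proof -
  let ?n = "sum_list a"
  have "blk (a[i := a!i - 1]) j \<subseteq> {1..?n-1}"
    using blk_subset[of j "a[i := a!i - 1]"] j sum_list_decr[OF i] by simp
  then have "remove_point ?n x f p ` blk (a[i := a!i - 1]) j
      = collapse f ` p ` expand x ` blk (a[i := a!i - 1]) j"
    by (auto simp: remove_point_def image_image intro!: image_cong)
  also have "\<dots> = collapse f ` p ` (blk a j - {x})"
    using expand_image_blk_decr[OF i x j] by simp
  also have "p ` (blk a j - {x}) = p ` blk a j - {f}"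
    using permutes_inj[OF p] f by (simp add: image_set_diff)
  finally show ?thesis .
qed

lemma rank_above_collapse:
  assumes "finite V" "y \<in> V" "y \<noteq> f"
  shows "rank_above (collapse f ` (V - {f})) (collapse f y) =
    (if f \<in> V \<and> y < f then rank_above V y - 1 else rank_above V y)"
proof -
  have "{z \<in> collapse f ` (V - {f}). collapse f y < z} = collapse f ` ({z\<in>V. y < z} - {f})"
    using assms collapse_less_iff by auto
  then have "rank_above (collapse f ` (V - {f})) (collapse f y) = card ({z\<in>V. y < z} - {f})"
    unfolding rank_above_def by (simp add: card_image inj_on_collapse)
  then show ?thesis
    using assms(1) by (auto simp: rank_above_def card_Diff_singleton_if)
qed

text \<open>How the value set \<open>V\<close> of a block starting after position \<open>c\<close> changes when a fixed value
  \<open>f\<close> is removed from the permutation: either \<open>f\<close> is the fixed value of this very block, or the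
  block lies entirely before position \<open>f\<close>, or entirely after it (and then moves down by one).\<close>

definition collapse_rel :: "nat \<Rightarrow> nat \<Rightarrow> nat set \<Rightarrow> nat set \<Rightarrow> nat \<Rightarrow> bool" where
  "collapse_rel c c' V W f \<longleftrightarrow> finite V \<and> W = collapse f ` (V - {f}) \<and>
     (f \<in> V \<and> sort_fixes c V f \<and> c' = c \<or>
      f \<notin> V \<and> c + card V < f \<and> c' = c \<or>
      f \<notin> V \<and> 1 \<le> f \<and> f \<le> c \<and> c' = c - 1)"

lemma collapse_rel_position:
  assumes r: "collapse_rel c c' V W f" and y: "y \<in> V" "y \<noteq> f"
  shows "c + 1 + rank_above V y \<noteq> f"
    and "collapse f (c + 1 + rank_above V y) = c' + 1 + rank_above W (collapse f y)"
proof -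
  have fin: "finite V" and W: "W = collapse f ` (V - {f})"
    using r by (auto simp: collapse_rel_def)
  have rank_less: "rank_above V y < card V"
    using rank_above_less_card[OF fin y(1)] .
  have rank_W: "rank_above W (collapse f y) =
      (if f \<in> V \<and> y < f then rank_above V y - 1 else rank_above V y)"
    using rank_above_collapse[OF fin y] W by simp
  consider (fixed) "f \<in> V" "sort_fixes c V f" "c' = c"
    | (before) "f \<notin> V" "c + card V < f" "c' = c"
    | (after) "f \<notin> V" "1 \<le> f" "f \<le> c" "c' = c - 1"
    using r by (auto simp: collapse_rel_def)
  then have "c + 1 + rank_above V y \<noteq> f \<and>
      collapse f (c + 1 + rank_above V y) = c' + 1 + rank_above W (collapse f y)"
  proof cases
    case fixed
    have f_eq: "f = c + 1 + rank_above V f"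
      using fixed by (simp add: sort_fixes_def)
    show ?thesis
    proof (cases "y < f")
      case True
      then have "rank_above V f < rank_above V y"
        using rank_above_strict_antimono[OF fin fixed(1)] by blast
      then show ?thesis
        using f_eq True fixed rank_W by (simp add: collapse_def)
    next
      case False
      then have "rank_above V y < rank_above V f"
        using y rank_above_strict_antimono[OF fin y(1)] by simp
      then show ?thesis
        using f_eq False fixed rank_W by (simp add: collapse_def)
    qed
  qed (use rank_less rank_W in \<open>simp_all add: collapse_def\<close>)
  then show "c + 1 + rank_above V y \<noteq> f"
    and "collapse f (c + 1 + rank_above V y) = c' + 1 + rank_above W (collapse f y)"
    by simp_all
qed

lemma collapse_rel_sort_fixes_iff:
  assumes r: "collapse_rel c c' V W f" and y: "y \<in> V" "y \<noteq> f"
  shows "sort_fixes c' W (collapse f y) \<longleftrightarrow> sort_fixes c V y"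
proof -
  have "collapse f y \<in> W"
    using r y by (auto simp: collapse_rel_def)
  then have "sort_fixes c' W (collapse f y) \<longleftrightarrow> collapse f y = collapse f (c + 1 + rank_above V y)"
    using collapse_rel_position(2)[OF r y] by (simp add: sort_fixes_def)
  also have "\<dots> \<longleftrightarrow> y = c + 1 + rank_above V y"
    using collapse_eq_iff[OF y(2) collapse_rel_position(1)[OF r y]] .
  finally show ?thesis
    using y by (simp add: sort_fixes_def)
qed

lemma collapse_rel_fixed_iff:
  assumes r: "collapse_rel c c' V W f" and f: "f \<notin> V"
  shows "(\<exists>w. sort_fixes c' W w) \<longleftrightarrow> (\<exists>y. sort_fixes c V y)"
proof -
  have W: "W = collapse f ` (V - {f})"
    using r by (simp add: collapse_rel_def)
  have "sort_fixes c' W w \<Longrightarrow> \<exists>y\<in>V. w = collapse f y" for w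
    using W by (auto simp: sort_fixes_def)
  moreover have "sort_fixes c V y \<Longrightarrow> y \<in> V" for y
    by (simp add: sort_fixes_def)
  ultimately show ?thesis
    using collapse_rel_sort_fixes_iff[OF r] f by metis
qed

lemma collapse_rel_not_fixed:
  assumes r: "collapse_rel c c' V W f" and f: "f \<in> V"
  shows "\<not> sort_fixes c' W w"
proof
  assume w: "sort_fixes c' W w"
  have fin: "finite V" and f_fixed: "sort_fixes c V f"
    using r f by (auto simp: collapse_rel_def)
  obtain y where y: "y \<in> V" "y \<noteq> f" "w = collapse f y"
    using w r by (auto simp: collapse_rel_def sort_fixes_def)
  then have "sort_fixes c V y"
    using collapse_rel_sort_fixes_iff[OF r y(1,2)] w by simp
  then show False
    using sort_fixes_unique[OF fin _ f_fixed] y(2) by blast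
qed

lemma collapse_rel_fixed_value:
  assumes r: "collapse_rel c c' V W f" and f: "f \<in> V"
  shows "f = c + 1 + card {w\<in>W. c' + 1 + rank_above W w < w}"
proof -
  have W: "W = collapse f ` (V - {f})" and fin: "finite V" and c': "c' = c"
    using r f by (auto simp: collapse_rel_def)
  have f_eq: "f = c + 1 + rank_above V f"
    using r f by (simp add: collapse_rel_def sort_fixes_def)
  have exceeds_iff: "c + 1 + rank_above V y < y \<longleftrightarrow> f < y" if y: "y \<in> V" "y \<noteq> f" for y
  proof (cases "f < y")
    case True
    then show ?thesis
      using rank_above_strict_antimono[OF fin y(1)] f_eq by fastforce
  next
    case False
    then have "y < f"
      using y by simp
    then show ?thesis
      using rank_above_strict_antimono[OF fin f] f_eq by fastforce
  qed
  have "{w\<in>W. c' + 1 + rank_above W w < w} = collapse f ` {y\<in>V. f < y}"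
  proof -
    have "c' + 1 + rank_above W (collapse f y) < collapse f y \<longleftrightarrow> f < y"
      if "y \<in> V" "y \<noteq> f" for y
      using collapse_rel_position[OF r that] collapse_less_iff[OF collapse_rel_position(1)[OF r that]]
        exceeds_iff[OF that] that(2) by auto
    then show ?thesis
      using W by auto
  qed
  then have "card {w\<in>W. c' + 1 + rank_above W w < w} = rank_above V f"
    by (simp add: card_image inj_on_collapse rank_above_def)
  then show ?thesis
    using f_eq by simp
qed

lemma exceeds_position_card_le:
  assumes fin: "finite W" and w: "w \<in> W" "c + 1 + rank_above W w < w"
  defines "P \<equiv> {w\<in>W. c + 1 + rank_above W w < w}"
  shows "c + 1 + card P \<le> w"
proof -
  define m where "m = Min P"
  have finP: "finite P"
    using fin by (simp add: P_def)
  have wP: "w \<in> P"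
    using w by (simp add: P_def)
  have mP: "m \<in> P"
    using wP finP unfolding m_def by (intro Min_in) auto
  have m_le: "m \<le> w"
    using wP finP by (simp add: m_def)
  have "P - {m} \<subseteq> {z\<in>W. m < z}"
  proof
    fix z assume z: "z \<in> P - {m}"
    then have "m \<le> z"
      using finP by (simp add: m_def)
    then show "z \<in> {z\<in>W. m < z}"
      using z by (auto simp: P_def)
  qed
  then have "card (P - {m}) \<le> rank_above W m"
    unfolding rank_above_def using fin by (intro card_mono) auto
  then have "card P \<le> rank_above W m + 1"
    using mP finP by (simp add: card_Diff_singleton)
  then show ?thesis
    using mP m_le by (simp add: P_def)
qed

lemma exceeds_position_upper_set:
  assumes fin: "finite W" and no_fixed: "\<And>w. \<not> sort_fixes c W w"
  defines "P \<equiv> {w\<in>W. c + 1 + rank_above W w < w}"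
  shows "{w\<in>W. c + 1 + card P \<le> w} = P"
proof -
  let ?Q = "{w\<in>W. w < c + 1 + rank_above W w}"
  have P_or_Q: "z \<in> P \<or> z \<in> ?Q" if "z \<in> W" for z
    using no_fixed[of z] that by (auto simp: sort_fixes_def P_def)
  have "w \<in> P" if w: "w \<in> W" and w_ge: "c + 1 + card P \<le> w" for w
  proof (rule ccontr)
    assume "w \<notin> P"
    then have wQ: "w \<in> ?Q"
      using P_or_Q w by blast
    define M where "M = Max ?Q"
    have finQ: "finite ?Q" and finP: "finite P"
      using fin by (simp_all add: P_def)
    have MQ: "M \<in> ?Q"
      using wQ finQ unfolding M_def by (intro Max_in) auto
    have w_le: "w \<le> M"
      using wQ finQ by (simp add: M_def)
    have "{z\<in>W. M < z} \<subseteq> P"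
    proof
      fix z assume z: "z \<in> {z\<in>W. M < z}"
      then have "z \<notin> ?Q"
        using Max_ge[OF finQ, of z] by (auto simp: M_def)
      then show "z \<in> P"
        using P_or_Q z by blast
    qed
    then have "rank_above W M \<le> card P"
      unfolding rank_above_def by (rule card_mono[OF finP])
    then show False
      using MQ w_le w_ge by simp
  qed
  then show ?thesis
    using exceeds_position_card_le[OF fin] by (auto simp: P_def)
qed

lemma sort_fixes_reinserted:
  assumes fin: "finite V" and W: "W = collapse F ` (V - {F})" and F: "F \<in> V"
    and no_fixed: "\<And>w. \<not> sort_fixes c W w"
    and F_eq: "F = c + 1 + card {w\<in>W. c + 1 + rank_above W w < w}"
  shows "sort_fixes c V F"
proof -
  let ?P = "{w\<in>W. c + 1 + rank_above W w < w}"
  have "finite W"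
    using fin W by simp
  then have "{w\<in>W. F \<le> w} = ?P"
    using exceeds_position_upper_set[OF _ no_fixed] F_eq by simp
  moreover have "collapse F ` {z\<in>V. F < z} = {w\<in>W. F \<le> w}"
  proof
    show "collapse F ` {z\<in>V. F < z} \<subseteq> {w\<in>W. F \<le> w}"
      using W by (auto simp: collapse_def)
    show "{w\<in>W. F \<le> w} \<subseteq> collapse F ` {z\<in>V. F < z}"
    proof
      fix w assume w: "w \<in> {w\<in>W. F \<le> w}"
      then obtain z where z: "z \<in> V" "z \<noteq> F" "w = collapse F z"
        using W by auto
      then have "F < z"
        using w by (auto simp: collapse_def split: if_splits)
      then show "w \<in> collapse F ` {z\<in>V. F < z}"
        using z by auto
    qed
  qed
  moreover have "inj_on (collapse F) {z\<in>V. F < z}"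
    by (rule inj_on_collapse) simp
  ultimately have "rank_above V F = card ?P"
    unfolding rank_above_def by (metis card_image)
  then show ?thesis
    using F F_eq by (simp add: sort_fixes_def)
qed

section \<open>The recurrence for permutations without fixed blocks\<close>

definition perms_with_fixed_blocks :: "nat list \<Rightarrow> nat list \<Rightarrow> (nat \<Rightarrow> nat) set" where
  "perms_with_fixed_blocks a e =
    {p. p permutes {1..sum_list a} \<and> (\<forall>j<length a. fixed_block a p j \<longleftrightarrow> e!j = 1)}"

definition reinsert_value :: "nat list \<Rightarrow> nat \<Rightarrow> (nat \<Rightarrow> nat) \<Rightarrow> nat" where
  "reinsert_value a i p' = block_start a i + 1 + card {w \<in> p' ` blk (a[i := a!i - 1]) i.
      block_start a i + 1 + rank_above (p' ` blk (a[i := a!i - 1]) i) w < w}"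

context
  fixes a :: "nat list" and i x f :: nat and p :: "nat \<Rightarrow> nat"
  assumes i: "i < length a" "1 \<le> a!i" and p: "p permutes {1..sum_list a}"
    and x: "x \<in> blk a i" and f: "p x = f"
    and fixed: "sort_fixes (block_start a i) (p ` blk a i) f"
begin

lemma remove_point_collapse_rel:
  assumes j: "j < length a"
  shows "collapse_rel (block_start a j) (block_start (a[i := a!i - 1]) j) (p ` blk a j)
    (remove_point (sum_list a) x f p ` blk (a[i := a!i - 1]) j) f"
proof -
  have img: "remove_point (sum_list a) x f p ` blk (a[i := a!i - 1]) j = collapse f ` (p ` blk a j - {f})"
    by (rule remove_point_image_blk[OF p i x f j])
  have f_in: "f \<in> p ` blk a i"
    using x f by auto
  have f_eq: "f = block_start a i + 1 + rank_above (p ` blk a i) f"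
    using fixed by (simp add: sort_fixes_def)
  have rank_less: "rank_above (p ` blk a i) f < a!i"
    using rank_above_less_card[of "p ` blk a i" f] f_in card_image_blk[OF p i(1)] by simp
  consider "j < i" | "j = i" | "i < j"
    by linarith
  then show ?thesis
  proof cases
    case 1
    have "f \<notin> p ` blk a j"
      using image_blk_unique[OF p f_in] 1 by blast
    moreover have "block_start a (Suc j) \<le> block_start a i"
      using 1 by (simp add: block_start_mono)
    then have "block_start a j + card (p ` blk a j) < f"
      using f_eq card_image_blk[OF p j] j by (simp add: block_start_Suc)
    moreover have "block_start (a[i := a!i - 1]) j = block_start a j"
      using block_start_decr[OF i, of j] 1 by simp
    ultimately show ?thesis
      using img by (simp add: collapse_rel_def)
  next
    case 2
    have "block_start (a[i := a!i - 1]) j = block_start a j"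
      using block_start_decr[OF i, of j] 2 by simp
    then show ?thesis
      using img f_in fixed 2 by (simp add: collapse_rel_def)
  next
    case 3
    have "f \<notin> p ` blk a j"
      using image_blk_unique[OF p f_in] 3 by blast
    moreover have "block_start a (Suc i) \<le> block_start a j"
      using 3 by (simp add: block_start_mono)
    then have "f \<le> block_start a j"
      using f_eq rank_less i by (simp add: block_start_Suc)
    moreover have "block_start (a[i := a!i - 1]) j = block_start a j - 1"
      using block_start_decr[OF i, of j] 3 by simp
    ultimately show ?thesis
      using img f_eq by (simp add: collapse_rel_def)
  qed
qed

lemma fixed_block_remove_point_iff:
  assumes "j < length a" "j \<noteq> i"
  shows "fixed_block (a[i := a!i - 1]) (remove_point (sum_list a) x f p) j \<longleftrightarrow> fixed_block a p j"
proof -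
  have "f \<notin> p ` blk a j"
    using image_blk_unique[OF p, of f i j] x f assms by auto
  then show ?thesis
    using collapse_rel_fixed_iff[OF remove_point_collapse_rel[OF assms(1)]] by (simp add: fixed_block_def)
qed

lemma not_fixed_block_remove_point:
  "\<not> fixed_block (a[i := a!i - 1]) (remove_point (sum_list a) x f p) i"
  using collapse_rel_not_fixed[OF remove_point_collapse_rel[OF i(1)]] x f
  by (auto simp: fixed_block_def)

lemma reinsert_value_remove_point: "reinsert_value a i (remove_point (sum_list a) x f p) = f"
proof -
  have "block_start (a[i := a!i - 1]) i = block_start a i"
    using block_start_decr[OF i, of i] by simp
  then show ?thesis
    using collapse_rel_fixed_value[OF remove_point_collapse_rel[OF i(1)]] x f
    by (auto simp: reinsert_value_def)
qed

lemma remove_point_mem_perms_with_fixed_blocks: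
  assumes p_mem: "p \<in> perms_with_fixed_blocks a e" and e: "length e = length a"
  shows "remove_point (sum_list a) x f p \<in> perms_with_fixed_blocks (a[i := a!i - 1]) (e[i := 0])"
proof -
  have "x \<in> {1..sum_list a}"
    using blk_subset[OF i(1)] x by blast
  then have "remove_point (sum_list a) x f p permutes {1..sum_list (a[i := a!i - 1])}"
    using remove_point_permutes[OF p _ f] sum_list_decr[OF i] by simp
  moreover have "fixed_block (a[i := a!i - 1]) (remove_point (sum_list a) x f p) j \<longleftrightarrow>
      e[i := 0] ! j = 1" if "j < length a" for j
  proof (cases "j = i")
    case True
    then show ?thesis
      using not_fixed_block_remove_point i(1) e by simp
  next
    case False
    then show ?thesis
      using p_mem that fixed_block_remove_point_iff[OF that False]
      by (simp add: perms_with_fixed_blocks_def)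
  qed
  ultimately show ?thesis
    by (simp add: perms_with_fixed_blocks_def)
qed

end

context
  fixes a :: "nat list" and i x :: nat and p' :: "nat \<Rightarrow> nat"
  assumes i: "i < length a" "1 \<le> a!i"
    and p': "p' permutes {1..sum_list (a[i := a!i - 1])}"
    and not_fixed: "\<not> fixed_block (a[i := a!i - 1]) p' i" and x: "x \<in> blk a i"
begin

lemma reinsert_value_range: "reinsert_value a i p' \<in> {1..sum_list a}"
proof -
  let ?W = "p' ` blk (a[i := a!i - 1]) i"
  have "card {w \<in> ?W. block_start a i + 1 + rank_above ?W w < w} \<le> card ?W"
    by (rule card_mono) auto
  also have "card ?W = a!i - 1"
    using card_image_blk[OF p', of i] i by simp
  finally have "reinsert_value a i p' \<le> block_start a (Suc i)"
    using i by (simp add: reinsert_value_def block_start_Suc)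
  also have "\<dots> \<le> sum_list a"
    using block_start_mono[of "Suc i" "length a" a] i by (simp add: block_start_length)
  finally show ?thesis
    by (simp add: reinsert_value_def)
qed

lemma insert_point_permutes_reinsert:
  "insert_point (sum_list a) x (reinsert_value a i p') p' permutes {1..sum_list a}"
  using insert_point_permutes[OF _ _ reinsert_value_range] p' sum_list_decr[OF i]
    blk_subset[OF i(1)] x by auto

lemma remove_insert_point_reinsert:
  "remove_point (sum_list a) x (reinsert_value a i p')
     (insert_point (sum_list a) x (reinsert_value a i p') p') = p'"
  using remove_insert_point[of p' "sum_list a"] p' sum_list_decr[OF i] blk_subset[OF i(1)] x by auto

lemma sort_fixes_reinsert_value:
  "sort_fixes (block_start a i)
     (insert_point (sum_list a) x (reinsert_value a i p') p' ` blk a i) (reinsert_value a i p')"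
proof -
  let ?f = "reinsert_value a i p'"
  let ?p = "insert_point (sum_list a) x ?f p'"
  have px: "?p x = ?f"
    by simp
  have W: "p' ` blk (a[i := a!i - 1]) i = collapse ?f ` (?p ` blk a i - {?f})"
    using remove_point_image_blk[OF insert_point_permutes_reinsert i x px i(1)]
      remove_insert_point_reinsert by simp
  have start: "block_start (a[i := a!i - 1]) i = block_start a i"
    using block_start_decr[OF i, of i] by simp
  show ?thesis
  proof (rule sort_fixes_reinserted[OF _ W])
    show "?f \<in> ?p ` blk a i"
      using x px by force
    show "\<not> sort_fixes (block_start a i) (p' ` blk (a[i := a!i - 1]) i) w" for w
      using not_fixed start by (simp add: fixed_block_def)
  qed (simp_all only: finite_imageI finite_blk reinsert_value_def)
qed

lemma insert_point_mem_perms_with_fixed_blocks: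
  assumes p'_mem: "p' \<in> perms_with_fixed_blocks (a[i := a!i - 1]) (e[i := 0])"
    and e: "length e = length a" "e!i = 1"
  shows "insert_point (sum_list a) x (reinsert_value a i p') p' \<in> perms_with_fixed_blocks a e"
proof -
  let ?f = "reinsert_value a i p'"
  let ?p = "insert_point (sum_list a) x ?f p'"
  have "fixed_block a ?p j \<longleftrightarrow> e!j = 1" if j: "j < length a" for j
  proof (cases "j = i")
    case True
    then show ?thesis
      using sort_fixes_reinsert_value e by (auto simp: fixed_block_def)
  next
    case False
    have px: "?p x = ?f"
      by simp
    have "fixed_block a ?p j \<longleftrightarrow> fixed_block (a[i := a!i - 1]) p' j"
      using fixed_block_remove_point_iff[OF i insert_point_permutes_reinsert x px
          sort_fixes_reinsert_value j False] remove_insert_point_reinsert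
      by simp
    then show ?thesis
      using p'_mem j False by (simp add: perms_with_fixed_blocks_def)
  qed
  then show ?thesis
    using insert_point_permutes_reinsert by (simp add: perms_with_fixed_blocks_def)
qed

end

lemma insert_point_reinsert_inj:
  assumes i: "i < length a" "1 \<le> a!i"
    and p1: "p1 permutes {1..sum_list (a[i := a!i - 1])}" "\<not> fixed_block (a[i := a!i - 1]) p1 i"
    and p2: "p2 permutes {1..sum_list (a[i := a!i - 1])}" "\<not> fixed_block (a[i := a!i - 1]) p2 i"
    and x: "x1 \<in> blk a i" "x2 \<in> blk a i"
    and eq: "insert_point (sum_list a) x1 (reinsert_value a i p1) p1 =
      insert_point (sum_list a) x2 (reinsert_value a i p2) p2" (is "?p = _")
  shows "x1 = x2 \<and> p1 = p2"
proof -
  have "sort_fixes (block_start a i) (?p ` blk a i) (reinsert_value a i p1)"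
    using sort_fixes_reinsert_value[OF i p1 x(1)] .
  moreover have "sort_fixes (block_start a i) (?p ` blk a i) (reinsert_value a i p2)"
    using sort_fixes_reinsert_value[OF i p2 x(2)] unfolding eq .
  ultimately have same_value: "reinsert_value a i p1 = reinsert_value a i p2"
    by (rule sort_fixes_unique[OF finite_imageI[OF finite_blk]])
  have "?p x1 = ?p x2"
    using insert_point_at[of "sum_list a" x2 "reinsert_value a i p2" p2] same_value
    unfolding eq[symmetric] by simp
  then have "x1 = x2"
    by (rule injD[OF permutes_inj[OF insert_point_permutes_reinsert[OF i p1 x(1)]]])
  moreover have "p1 = p2"
  proof -
    have "p1 = remove_point (sum_list a) x1 (reinsert_value a i p1) ?p"
      using remove_insert_point_reinsert[OF i p1 x(1)] by simp
    also have "\<dots> = p2"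
      using remove_insert_point_reinsert[OF i p2 x(2)]
      unfolding eq by (simp only: same_value \<open>x1 = x2\<close>)
    finally show ?thesis .
  qed
  ultimately show ?thesis
    by simp
qed

lemma card_perms_with_fixed_blocks_decr:
  assumes i: "i < length a" "1 \<le> a!i"
    and e: "length e = length a" "e!i = 1"
  shows "card (perms_with_fixed_blocks a e) =
    a!i * card (perms_with_fixed_blocks (a[i := a!i - 1]) (e[i := 0]))"
proof -
  let ?a' = "a[i := a!i - 1]"
  let ?T' = "perms_with_fixed_blocks ?a' (e[i := 0])"
  let ?ins = "\<lambda>(x, p'). insert_point (sum_list a) x (reinsert_value a i p') p'"
  let ?D = "blk a i \<times> ?T'"
  have T'_props: "p' permutes {1..sum_list ?a'}" "\<not> fixed_block ?a' p' i" if "p' \<in> ?T'" for p'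
    using that i e by (auto simp: perms_with_fixed_blocks_def)
  have inj: "inj_on ?ins ?D"
    using insert_point_reinsert_inj[OF i T'_props T'_props] by (auto simp: inj_on_def)
  have "?ins ` ?D = perms_with_fixed_blocks a e"
  proof
    show "?ins ` ?D \<subseteq> perms_with_fixed_blocks a e"
    proof
      fix p assume "p \<in> ?ins ` ?D"
      then obtain x p' where mem: "x \<in> blk a i" "p' \<in> ?T'" and p: "p = ?ins (x, p')"
        by blast
      show "p \<in> perms_with_fixed_blocks a e"
        using insert_point_mem_perms_with_fixed_blocks[OF i T'_props[OF mem(2)] mem(1) mem(2) e] p
        by simp
    qed
    show "perms_with_fixed_blocks a e \<subseteq> ?ins ` ?D"
    proof
      fix p assume p_mem: "p \<in> perms_with_fixed_blocks a e"
      then have p: "p permutes {1..sum_list a}" and "fixed_block a p i"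
        using i e by (auto simp: perms_with_fixed_blocks_def)
      then obtain f where fixed: "sort_fixes (block_start a i) (p ` blk a i) f"
        by (auto simp: fixed_block_def)
      then obtain x where x: "x \<in> blk a i" "p x = f"
        by (auto simp: sort_fixes_def)
      have "x \<in> {1..sum_list a}"
        using blk_subset[OF i(1)] x(1) by blast
      then have "?ins (x, remove_point (sum_list a) x f p) = p"
        using reinsert_value_remove_point[OF i p x fixed] insert_remove_point[OF p _ x(2)] by simp
      moreover have "(x, remove_point (sum_list a) x f p) \<in> ?D"
        using x remove_point_mem_perms_with_fixed_blocks[OF i p x fixed p_mem e(1)] by simp
      ultimately show "p \<in> ?ins ` ?D"
        by force
    qed
  qed
  then have "card (perms_with_fixed_blocks a e) = card ?D"
    using card_image[OF inj] by simp
  then show ?thesis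
    by (simp add: card_cartesian_product card_blk[OF i(1)])
qed

definition vectors_le :: "nat list \<Rightarrow> nat list set" where
  "vectors_le a = {b. length b = length a \<and> (\<forall>i<length a. b!i \<le> a!i)}"

lemma vectors_le_Nil [simp]: "vectors_le [] = {[]}"
  by (auto simp: vectors_le_def)

lemma vectors_le_Cons: "vectors_le (x#a) = (\<lambda>(y, b). y#b) ` ({..x} \<times> vectors_le a)"
proof
  show "vectors_le (x#a) \<subseteq> (\<lambda>(y, b). y#b) ` ({..x} \<times> vectors_le a)"
  proof
    fix c assume c: "c \<in> vectors_le (x#a)"
    then obtain y b where c_eq: "c = y#b"
      by (cases c) (auto simp: vectors_le_def)
    then have "y \<le> x" "b \<in> vectors_le a"
      using c by (fastforce simp: vectors_le_def)+
    then show "c \<in> (\<lambda>(y, b). y#b) ` ({..x} \<times> vectors_le a)"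
      using c_eq by auto
  qed
  show "(\<lambda>(y, b). y#b) ` ({..x} \<times> vectors_le a) \<subseteq> vectors_le (x#a)"
    by (auto simp: vectors_le_def nth_Cons split: nat.split)
qed

lemma finite_vectors_le [simp]: "finite (vectors_le a)"
  by (induction a) (auto simp: vectors_le_Cons)

lemma sum_vectors_le_Cons:
  "(\<Sum>b\<in>vectors_le (x#a). F b) = (\<Sum>y\<le>x. \<Sum>b\<in>vectors_le a. F (y#b))"
proof -
  have inj: "inj_on (\<lambda>(y, b). y#b) ({..x} \<times> vectors_le a)"
    by (auto simp: inj_on_def)
  have "(\<Sum>y\<le>x. \<Sum>b\<in>vectors_le a. F (y#b)) = (\<Sum>(y, b)\<in>{..x} \<times> vectors_le a. F (y#b))"
    by (rule sum.cartesian_product)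
  also have "\<dots> = (\<Sum>b\<in>vectors_le (x#a). F b)"
    unfolding vectors_le_Cons by (subst sum.reindex[OF inj]) (auto intro!: sum.cong)
  finally show ?thesis
    by simp
qed

lemma sum_list_map2_minus:
  fixes a e :: "nat list"
  shows "length e = length a \<Longrightarrow> \<forall>i<length a. e!i \<le> a!i \<Longrightarrow>
    sum_list (map2 (-) a e) + sum_list e = sum_list a"
proof (induction a arbitrary: e)
  case (Cons x a)
  then obtain y e' where e: "e = y # e'"
    by (cases e) auto
  then have "y \<le> x" "\<forall>i<length a. e'!i \<le> a!i"
    using Cons.prems by auto
  then show ?case
    using Cons.prems Cons.IH[of e'] e by simp
qed simp

definition prod_pow :: "nat list \<Rightarrow> nat list \<Rightarrow> nat" where
  "prod_pow a e = (\<Prod>i<length a. a!i ^ e!i)"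

lemma prod_pow_Nil [simp]: "prod_pow [] e = 1"
  by (simp add: prod_pow_def)

lemma prod_pow_Cons: "prod_pow (x#a) (y#e) = x^y * prod_pow a e"
  unfolding prod_pow_def by (simp only: length_Cons prod.lessThan_Suc_shift nth_Cons_0 nth_Cons_Suc)

lemma prod_pow_nonzero_le:
  assumes "e \<in> vectors_le (replicate (length a) 1)" "prod_pow a e \<noteq> 0"
  shows "\<forall>i<length a. e!i \<le> a!i"
proof (intro allI impI)
  fix i assume i: "i < length a"
  then have "a!i ^ e!i \<noteq> 0" "e!i \<le> 1"
    using assms by (auto simp: prod_pow_def vectors_le_def)
  then show "e!i \<le> a!i"
    by (cases "e!i") auto
qed

lemma prod_pow_decr:
  assumes "i < length a" "length e = length a" "e!i = 1"
  shows "prod_pow a e = a!i * prod_pow (a[i := a!i - 1]) (e[i := 0])"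
proof -
  have i: "i \<in> {..<length a}"
    using assms by simp
  have "prod_pow a e = a!i ^ e!i * (\<Prod>j\<in>{..<length a} - {i}. a!j ^ e!j)"
    unfolding prod_pow_def by (rule prod.remove[OF _ i]) simp
  moreover have "prod_pow (a[i := a!i - 1]) (e[i := 0]) =
      (a[i := a!i - 1])!i ^ (e[i := 0])!i * (\<Prod>j\<in>{..<length a} - {i}. a!j ^ e!j)"
    unfolding prod_pow_def length_list_update by (subst prod.remove[OF _ i]) auto
  ultimately show ?thesis
    using assms by simp
qed

definition count_free :: "nat list \<Rightarrow> nat" where
  "count_free a = card {p. p permutes {1..sum_list a} \<and> (\<forall>j<length a. \<not> fixed_block a p j)}"

lemma card_perms_with_fixed_blocks:
  "length e = length a \<Longrightarrow> \<forall>j<length a. e!j \<le> 1 \<Longrightarrow>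
    card (perms_with_fixed_blocks a e) = prod_pow a e * count_free (map2 (-) a e)"
proof (induction "sum_list e" arbitrary: a e rule: less_induct)
  case less
  show ?case
  proof (cases "\<exists>i<length a. e!i = 1")
    case False
    then have zero: "\<forall>j<length a. e!j = 0"
      using less.prems by (metis le_neq_implies_less less_one)
    then have "prod_pow a e = 1" "map2 (-) a e = a"
      using less.prems by (simp_all add: prod_pow_def list_eq_iff_nth_eq)
    moreover have "perms_with_fixed_blocks a e =
        {p. p permutes {1..sum_list a} \<and> (\<forall>j<length a. \<not> fixed_block a p j)}"
      using zero by (auto simp: perms_with_fixed_blocks_def)
    ultimately show ?thesis
      by (simp add: count_free_def)
  next
    case True
    then obtain i where i: "i < length a" "e!i = 1"
      by blast
    show ?thesis
    proof (cases "a!i = 0")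
      case True
      then have "perms_with_fixed_blocks a e = {}"
        using i card_blk[OF i(1)] by (auto simp: perms_with_fixed_blocks_def fixed_block_def sort_fixes_def)
      moreover have "prod_pow a e = 0"
        using i True less.prems unfolding prod_pow_def by (subst prod_zero_iff) auto
      ultimately show ?thesis
        by simp
    next
      case False
      have "sum_list (e[i := 0]) < sum_list e"
        using i less.prems sum_list_update[of i e 0] elem_le_sum_list[of i e] by simp
      moreover have "length (e[i := 0]) = length (a[i := a!i - 1])"
        "\<forall>j<length (a[i := a!i - 1]). e[i := 0] ! j \<le> 1"
        using less.prems i by (auto simp: nth_list_update)
      ultimately have "card (perms_with_fixed_blocks (a[i := a!i - 1]) (e[i := 0])) =
          prod_pow (a[i := a!i - 1]) (e[i := 0]) * count_free (map2 (-) (a[i := a!i - 1]) (e[i := 0]))"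
        using less.hyps by blast
      moreover have "map2 (-) (a[i := a!i - 1]) (e[i := 0]) = map2 (-) a e"
        using i less.prems by (auto simp: list_eq_iff_nth_eq nth_list_update)
      ultimately show ?thesis
        using card_perms_with_fixed_blocks_decr[OF i(1) _ less.prems(1) i(2)]
          prod_pow_decr[OF i(1) less.prems(1) i(2)] False by simp
    qed
  qed
qed

lemma fact_eq_sum_card_perms_with_fixed_blocks:
  "fact (sum_list a) = (\<Sum>e\<in>vectors_le (replicate (length a) 1). card (perms_with_fixed_blocks a e))"
proof -
  let ?E = "vectors_le (replicate (length a) 1)"
  let ?T = "perms_with_fixed_blocks a"
  have "{p. p permutes {1..sum_list a}} = (\<Union>e\<in>?E. ?T e)"
  proof
    show "{p. p permutes {1..sum_list a}} \<subseteq> (\<Union>e\<in>?E. ?T e)"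
    proof
      fix p assume "p \<in> {p. p permutes {1..sum_list a}}"
      then have "p \<in> ?T (map (\<lambda>j. if fixed_block a p j then 1 else 0) [0..<length a])"
        by (auto simp: perms_with_fixed_blocks_def)
      moreover have "map (\<lambda>j. if fixed_block a p j then 1 else 0) [0..<length a] \<in> ?E"
        by (auto simp: vectors_le_def)
      ultimately show "p \<in> (\<Union>e\<in>?E. ?T e)"
        by blast
    qed
    show "(\<Union>e\<in>?E. ?T e) \<subseteq> {p. p permutes {1..sum_list a}}"
      by (auto simp: perms_with_fixed_blocks_def)
  qed
  moreover have "\<forall>e\<in>?E. finite (?T e)"
    by (auto intro: finite_subset[OF _ finite_permutations[of "{1..sum_list a}"]]
        simp: perms_with_fixed_blocks_def)
  moreover have "e1 = e2" if e: "e1 \<in> ?E" "e2 \<in> ?E" "?T e1 \<inter> ?T e2 \<noteq> {}" for e1 e2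
  proof -
    have "\<forall>j<length a. e1!j = 1 \<longleftrightarrow> e2!j = 1"
      using e(3) by (auto simp: perms_with_fixed_blocks_def)
    moreover have "\<forall>j<length a. e1!j \<le> 1 \<and> e2!j \<le> 1"
      using e by (auto simp: vectors_le_def)
    ultimately have "\<forall>j<length a. e1!j = e2!j"
      by (metis le_neq_implies_less less_one)
    then show "e1 = e2"
      using e by (auto simp: vectors_le_def list_eq_iff_nth_eq)
  qed
  then have "\<forall>e1\<in>?E. \<forall>e2\<in>?E. e1 \<noteq> e2 \<longrightarrow> ?T e1 \<inter> ?T e2 = {}"
    by blast
  ultimately have "card {p. p permutes {1..sum_list a}} = (\<Sum>e\<in>?E. card (?T e))"
    by (simp add: card_UN_disjoint)
  then show ?thesis
    by (simp add: card_permutations)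
qed

definition factorial_recurrence :: "(nat list \<Rightarrow> complex) \<Rightarrow> bool" where
  "factorial_recurrence X \<longleftrightarrow> (\<forall>a.
     (\<Sum>e\<in>vectors_le (replicate (length a) 1). of_nat (prod_pow a e) * X (map2 (-) a e)) =
     fact (sum_list a))"

lemma factorial_recurrence_count_free: "factorial_recurrence (\<lambda>a. of_nat (count_free a))"
proof -
  have "fact (sum_list a) =
      (\<Sum>e\<in>vectors_le (replicate (length a) 1). prod_pow a e * count_free (map2 (-) a e))" for a
    unfolding fact_eq_sum_card_perms_with_fixed_blocks
    by (intro sum.cong refl card_perms_with_fixed_blocks) (auto simp: vectors_le_def)
  then have "(fact (sum_list a) :: complex) = of_nat
      (\<Sum>e\<in>vectors_le (replicate (length a) 1). prod_pow a e * count_free (map2 (-) a e))" for a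
    by (metis of_nat_fact)
  then show ?thesis
    unfolding factorial_recurrence_def by simp
qed

lemma factorial_recurrence_unique:
  assumes X: "factorial_recurrence X" and Y: "factorial_recurrence Y"
  shows "X a = Y a"
proof (induction "sum_list a" arbitrary: a rule: less_induct)
  case less
  let ?E = "vectors_le (replicate (length a) 1)"
  let ?Z = "replicate (length a) 0"
  have Z: "?Z \<in> ?E" "prod_pow a ?Z = 1" "map2 (-) a ?Z = a"
    by (auto simp: vectors_le_def prod_pow_def list_eq_iff_nth_eq)
  have "of_nat (prod_pow a e) * X (map2 (-) a e) = of_nat (prod_pow a e) * Y (map2 (-) a e)"
    if e: "e \<in> ?E - {?Z}" for e
  proof (cases "prod_pow a e = 0")
    case False
    have len: "length e = length a"
      using e by (simp add: vectors_le_def)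
    then have "sum_list (map2 (-) a e) + sum_list e = sum_list a"
      using sum_list_map2_minus prod_pow_nonzero_le[OF _ False] e by blast
    moreover have "sum_list e \<noteq> 0"
      using e len by (auto simp: list_eq_iff_nth_eq)
    ultimately have "sum_list (map2 (-) a e) < sum_list a"
      by linarith
    then show ?thesis
      using less by simp
  qed simp
  then have "(\<Sum>e\<in>?E - {?Z}. of_nat (prod_pow a e) * X (map2 (-) a e)) =
      (\<Sum>e\<in>?E - {?Z}. of_nat (prod_pow a e) * Y (map2 (-) a e))"
    by (rule sum.cong[OF refl])
  moreover have "(\<Sum>e\<in>?E. of_nat (prod_pow a e) * X (map2 (-) a e)) =
      (\<Sum>e\<in>?E. of_nat (prod_pow a e) * Y (map2 (-) a e))"
    using X Y by (simp add: factorial_recurrence_def)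
  ultimately show ?case
    using sum.remove[OF finite_vectors_le Z(1)] Z
    by (metis (no_types, lifting) add_right_cancel mult_1 of_nat_1)
qed

section \<open>The right-hand side satisfies the recurrence\<close>

lemma card_permutes_fixing:
  assumes "S \<subseteq> {1..m}"
  shows "card {p. p permutes {1..m} \<and> S \<subseteq> {i\<in>{1..m}. p i = i}} = fact (m - card S)"
proof -
  have "{p. p permutes {1..m} \<and> S \<subseteq> {i\<in>{1..m}. p i = i}} = {p. p permutes ({1..m} - S)}"
    using assms unfolding permutes_def by blast
  moreover have "card ({1..m} - S) = m - card S"
    using assms by (simp add: card_Diff_subset finite_subset)
  ultimately show ?thesis
    by (simp add: card_permutations)
qed

lemma card_filter_eq_sum: "finite A \<Longrightarrow> card {x\<in>A. P x} = (\<Sum>x\<in>A. if P x then 1 else 0)"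
  by (simp add: sum.inter_filter[symmetric])

text \<open>Double counting pairs of a permutation and a \<open>j\<close>-set of its fixed points.\<close>

lemma sum_card_fixed_points_choose:
  "(\<Sum>p\<in>{p. p permutes {1..m}}. card {i\<in>{1..m}. p i = i} choose j) = (m choose j) * fact (m - j)"
proof -
  let ?P = "{p. p permutes {1..m}}"
  let ?Sj = "{S. S \<subseteq> {1..m} \<and> card S = j}"
  let ?fix = "\<lambda>p. {i\<in>{1..m}. p i = i}"
  have fin_P: "finite ?P"
    by (simp add: finite_permutations)
  have fin_Sj: "finite ?Sj"
    by (rule finite_subset[of _ "Pow {1..m}"]) auto
  have "card (?fix p) choose j = card {S\<in>?Sj. S \<subseteq> ?fix p}" for p
  proof -
    have "{S\<in>?Sj. S \<subseteq> ?fix p} = {S. S \<subseteq> ?fix p \<and> card S = j}"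
      by auto
    then show ?thesis
      by (simp add: n_subsets)
  qed
  then have "(\<Sum>p\<in>?P. card (?fix p) choose j) = (\<Sum>p\<in>?P. card {S\<in>?Sj. S \<subseteq> ?fix p})"
    by simp
  also have "\<dots> = (\<Sum>p\<in>?P. \<Sum>S\<in>?Sj. if S \<subseteq> ?fix p then 1 else 0)"
    by (simp only: card_filter_eq_sum[OF fin_Sj])
  also have "\<dots> = (\<Sum>S\<in>?Sj. \<Sum>p\<in>?P. if S \<subseteq> ?fix p then 1 else 0)"
    by (rule sum.swap)
  also have "\<dots> = (\<Sum>S\<in>?Sj. card {p\<in>?P. S \<subseteq> ?fix p})"
    by (simp only: card_filter_eq_sum[OF fin_P])
  also have "\<dots> = (\<Sum>S\<in>?Sj. fact (m - j))"
    using card_permutes_fixing by (intro sum.cong refl) auto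
  also have "\<dots> = (m choose j) * fact (m - j)"
    using n_subsets[of "{1..m}" j] by simp
  finally show ?thesis .
qed

lemma f_lam_eq_sum: "f_lam lam m = (\<Sum>j\<le>m. of_nat ((m choose j) * fact (m - j)) * (lam - 1) ^ j)"
proof -
  let ?P = "{p. p permutes {1..m}}"
  let ?F = "\<lambda>p. card {i\<in>{1..m}. p i = i}"
  have F_le: "?F p \<le> m" for p
  proof -
    have "?F p \<le> card {1..m}"
      by (rule card_mono) auto
    then show ?thesis
      by simp
  qed
  have "lam ^ k = (\<Sum>j\<le>k. of_nat (k choose j) * (lam - 1) ^ j)" for k
    using binomial_ring[of "lam - 1" 1 k] by simp
  then have "f_lam lam m = (\<Sum>p\<in>?P. \<Sum>j\<le>?F p. of_nat (?F p choose j) * (lam - 1) ^ j)"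
    unfolding f_lam_def by simp
  also have "\<dots> = (\<Sum>p\<in>?P. \<Sum>j\<le>m. of_nat (?F p choose j) * (lam - 1) ^ j)"
    using F_le by (intro sum.cong refl sum.mono_neutral_left) auto
  also have "\<dots> = (\<Sum>j\<le>m. of_nat (\<Sum>p\<in>?P. ?F p choose j) * (lam - 1) ^ j)"
    by (subst sum.swap) (simp add: sum_distrib_right)
  finally show ?thesis
    by (simp only: sum_card_fixed_points_choose)
qed

lemma f_lam_0 [simp]: "f_lam lam 0 = 1"
  by (simp add: f_lam_eq_sum)

lemma f_lam_Suc: "f_lam lam (Suc m) = of_nat (Suc m) * f_lam lam m + (lam - 1) ^ Suc m"
proof -
  have coeff: "(Suc m choose j) * fact (Suc m - j) = Suc m * ((m choose j) * fact (m - j))"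
    if "j \<le> m" for j
  proof -
    have "fact j * ((Suc m choose j) * fact (Suc m - j)) = fact j * (Suc m * ((m choose j) * fact (m - j)))"
      using binomial_fact_lemma[of j "Suc m"] binomial_fact_lemma[of j m] that
      by (simp add: algebra_simps)
    then show ?thesis
      by simp
  qed
  have "f_lam lam (Suc m) =
      (\<Sum>j\<le>m. of_nat ((Suc m choose j) * fact (Suc m - j)) * (lam - 1) ^ j) + (lam - 1) ^ Suc m"
    by (simp add: f_lam_eq_sum)
  also have "(\<Sum>j\<le>m. of_nat ((Suc m choose j) * fact (Suc m - j)) * (lam - 1) ^ j) =
      of_nat (Suc m) * f_lam lam m"
    unfolding f_lam_eq_sum sum_distrib_left
    by (intro sum.cong refl) (simp only: atMost_iff coeff of_nat_mult mult.assoc)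
  finally show ?thesis .
qed

lemma sum_binomial_f_lam_alternating:
  "(\<Sum>j\<le>n. of_nat (n choose j) * ((-(lam-1))^j * f_lam lam (n - j))) = fact n"
proof (induction n)
  case (Suc n)
  let ?m = "lam - 1"
  have f_diff: "f_lam lam (Suc n - j) = of_nat (Suc n - j) * f_lam lam (n - j) + ?m ^ (Suc n - j)"
    if "j \<le> Suc n" for j
    using that f_lam_Suc[of lam "n - j"] by (cases "j = Suc n") (simp_all add: Suc_diff_le)
  have "(\<Sum>j\<le>Suc n. of_nat (Suc n choose j) * ((-?m)^j * f_lam lam (Suc n - j))) =
      (\<Sum>j\<le>Suc n. of_nat (Suc n choose j) * (-?m)^j * ?m ^ (Suc n - j)) +
      (\<Sum>j\<le>Suc n. of_nat ((Suc n - j) * (Suc n choose j)) * ((-?m)^j * f_lam lam (n - j)))"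
    unfolding sum.distrib[symmetric]
  proof (rule sum.cong[OF refl])
    fix j assume "j \<in> {..Suc n}"
    then have j: "j \<le> Suc n"
      by simp
    show "of_nat (Suc n choose j) * ((-?m)^j * f_lam lam (Suc n - j)) =
        of_nat (Suc n choose j) * (-?m)^j * ?m ^ (Suc n - j) +
        of_nat ((Suc n - j) * (Suc n choose j)) * ((-?m)^j * f_lam lam (n - j))"
      unfolding f_diff[OF j] of_nat_mult by (simp add: algebra_simps)
  qed
  also have "(\<Sum>j\<le>Suc n. of_nat (Suc n choose j) * (-?m)^j * ?m ^ (Suc n - j)) = (-?m + ?m)^(Suc n)"
    by (rule binomial_ring[symmetric])
  also have "(\<Sum>j\<le>Suc n. of_nat ((Suc n - j) * (Suc n choose j)) * ((-?m)^j * f_lam lam (n - j))) =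
      of_nat (Suc n) * (\<Sum>j\<le>Suc n. of_nat (n choose j) * ((-?m)^j * f_lam lam (n - j)))"
    unfolding sum_distrib_left
    by (intro sum.cong refl) (simp only: binomial_absorb_comp diff_Suc_1 of_nat_mult mult.assoc)
  finally show ?case
    using Suc.IH by simp
qed simp

lemma prod_nth_Cons:
  "(\<Prod>i<length (x#a). F ((x#a)!i) ((y#b)!i)) = F x y * (\<Prod>i<length a. F (a!i) (b!i))"
  by (simp only: length_Cons prod.lessThan_Suc_shift nth_Cons_0 nth_Cons_Suc)

lemma sum_binomial_Suc:
  "(\<Sum>y\<le>Suc x. of_nat (Suc x choose y) * (P y :: complex)) =
   (\<Sum>y\<le>x. of_nat (x choose y) * P y) + (\<Sum>y\<le>x. of_nat (x choose y) * P (Suc y))"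
proof -
  have "(\<Sum>y\<le>Suc x. of_nat (Suc x choose y) * P y) =
      P 0 + (\<Sum>y\<le>x. of_nat (Suc x choose Suc y) * P (Suc y))"
    by (subst sum.atMost_Suc_shift) (simp del: binomial_Suc_Suc)
  also have "\<dots> = P 0 + (\<Sum>y\<le>x. of_nat (x choose Suc y) * P (Suc y)) +
      (\<Sum>y\<le>x. of_nat (x choose y) * P (Suc y))"
    by (simp add: sum.distrib algebra_simps)
  also have "P 0 + (\<Sum>y\<le>x. of_nat (x choose Suc y) * P (Suc y)) =
      (\<Sum>y\<le>Suc x. of_nat (x choose y) * P y)"
    by (subst sum.atMost_Suc_shift) simp
  also have "\<dots> = (\<Sum>y\<le>x. of_nat (x choose y) * P y)"
    by simp
  finally show ?thesis .
qed

lemma binomial_convolution: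
  "(\<Sum>y\<le>x. of_nat (x choose y) * (\<Sum>j\<le>m. of_nat (m choose j) * (\<psi> (y + j) :: complex))) =
   (\<Sum>t\<le>x + m. of_nat (x + m choose t) * \<psi> t)"
proof (induction x arbitrary: \<psi>)
  case (Suc x)
  have "(\<Sum>y\<le>Suc x. of_nat (Suc x choose y) * (\<Sum>j\<le>m. of_nat (m choose j) * \<psi> (y + j))) =
      (\<Sum>y\<le>x. of_nat (x choose y) * (\<Sum>j\<le>m. of_nat (m choose j) * \<psi> (y + j))) +
      (\<Sum>y\<le>x. of_nat (x choose y) * (\<Sum>j\<le>m. of_nat (m choose j) * (\<lambda>t. \<psi> (Suc t)) (y + j)))"
    by (subst sum_binomial_Suc) simp
  also have "\<dots> = (\<Sum>t\<le>x + m. of_nat (x + m choose t) * \<psi> t) +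
      (\<Sum>t\<le>x + m. of_nat (x + m choose t) * \<psi> (Suc t))"
    using Suc.IH[of \<psi>] Suc.IH[of "\<lambda>t. \<psi> (Suc t)"] by simp
  also have "\<dots> = (\<Sum>t\<le>Suc (x + m). of_nat (Suc (x + m) choose t) * \<psi> t)"
    by (subst sum_binomial_Suc) simp
  finally show ?case
    by simp
qed simp

lemma sum_vectors_le_prod_choose:
  "(\<Sum>d\<in>vectors_le a. \<psi> (sum_list d) * (\<Prod>i<length a. of_nat (a!i choose d!i))) =
   (\<Sum>j\<le>sum_list a. of_nat (sum_list a choose j) * (\<psi> j :: complex))"
proof (induction a arbitrary: \<psi>)
  case (Cons x a)
  have "(\<Sum>d\<in>vectors_le (x#a). \<psi> (sum_list d) * (\<Prod>i<length (x#a). of_nat ((x#a)!i choose d!i))) =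
      (\<Sum>y\<le>x. \<Sum>d\<in>vectors_le a. \<psi> (y + sum_list d) *
        (of_nat (x choose y) * (\<Prod>i<length a. of_nat (a!i choose d!i))))"
    by (simp only: sum_vectors_le_Cons prod_nth_Cons[of "\<lambda>u v. of_nat (u choose v)"] sum_list.Cons)
  also have "\<dots> = (\<Sum>y\<le>x. of_nat (x choose y) *
      (\<Sum>d\<in>vectors_le a. \<psi> (y + sum_list d) * (\<Prod>i<length a. of_nat (a!i choose d!i))))"
    by (simp add: sum_distrib_left algebra_simps)
  also have "\<dots> = (\<Sum>y\<le>x. of_nat (x choose y) *
      (\<Sum>j\<le>sum_list a. of_nat (sum_list a choose j) * \<psi> (y + j)))"
  proof (rule sum.cong[OF refl])
    fix y
    show "of_nat (x choose y) *
        (\<Sum>d\<in>vectors_le a. \<psi> (y + sum_list d) * (\<Prod>i<length a. of_nat (a!i choose d!i))) =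
      of_nat (x choose y) * (\<Sum>j\<le>sum_list a. of_nat (sum_list a choose j) * \<psi> (y + j))"
      using Cons.IH[of "\<lambda>s. \<psi> (y + s)"] by simp
  qed
  also have "\<dots> = (\<Sum>t\<le>x + sum_list a. of_nat (x + sum_list a choose t) * \<psi> t)"
    by (rule binomial_convolution)
  finally show ?case
    by simp
qed simp

text \<open>The right-hand side of the theorem, with \<open>\<psi> s\<close> in place of \<open>f_lam lam (n - s)\<close>.\<close>

definition incl_excl :: "complex \<Rightarrow> nat list \<Rightarrow> (nat \<Rightarrow> complex) \<Rightarrow> complex" where
  "incl_excl lam a \<psi> = (\<Sum>b\<in>vectors_le a. (-1) ^ sum_list b * \<psi> (sum_list b) *
       (\<Prod>i<length a. of_nat (a ! i choose b ! i) * f_lam lam (b ! i)))"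

lemma incl_excl_Nil [simp]: "incl_excl lam [] \<psi> = \<psi> 0"
  by (simp add: incl_excl_def)

lemma incl_excl_Cons:
  "incl_excl lam (x#a) \<psi> =
    (\<Sum>y\<le>x. (-1)^y * of_nat (x choose y) * f_lam lam y * incl_excl lam a (\<lambda>s. \<psi> (y + s)))"
  unfolding incl_excl_def
  by (simp only: sum_vectors_le_Cons prod_nth_Cons[of "\<lambda>u v. of_nat (u choose v) * f_lam lam v"]
      sum_list.Cons power_add sum_distrib_left) (simp add: algebra_simps)

lemma sum_incl_excl_Cons:
  "(\<Sum>e\<in>E. of_nat (c * prod_pow a e) * incl_excl lam (z # map2 (-) a e) (\<lambda>s. \<phi> (s + t e))) =
   of_nat c * (\<Sum>y\<le>z. (-1)^y * of_nat (z choose y) * f_lam lam y *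
     (\<Sum>e\<in>E. of_nat (prod_pow a e) * incl_excl lam (map2 (-) a e) (\<lambda>s. \<phi> (y + s + t e))))"
proof -
  have "(\<Sum>e\<in>E. of_nat (c * prod_pow a e) * incl_excl lam (z # map2 (-) a e) (\<lambda>s. \<phi> (s + t e))) =
      (\<Sum>e\<in>E. \<Sum>y\<le>z. of_nat c * ((-1)^y * of_nat (z choose y) * f_lam lam y *
        (of_nat (prod_pow a e) * incl_excl lam (map2 (-) a e) (\<lambda>s. \<phi> (y + s + t e)))))"
    by (simp add: incl_excl_Cons sum_distrib_left algebra_simps)
  also have "\<dots> = of_nat c * (\<Sum>y\<le>z. (-1)^y * of_nat (z choose y) * f_lam lam y *
      (\<Sum>e\<in>E. of_nat (prod_pow a e) * incl_excl lam (map2 (-) a e) (\<lambda>s. \<phi> (y + s + t e))))"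
    by (subst sum.swap) (simp add: sum_distrib_left)
  finally show ?thesis .
qed

text \<open>The contribution of a single block: with \<open>K\<close> collecting the other blocks, both ways of
  treating a block (left as it is, or with one entry removed in one of \<open>x\<close> ways) combine via
  \<open>f_lam_Suc\<close> to an ordinary binomial sum in \<open>1 - lam\<close>.\<close>

lemma single_block_identity:
  "(\<Sum>y\<le>x. (-1)^y * of_nat (x choose y) * f_lam lam y * K y) +
   of_nat x * (\<Sum>y\<le>x - 1. (-1)^y * of_nat ((x - 1) choose y) * f_lam lam y * K (y + 1)) =
   (\<Sum>d\<le>x. (-(lam-1))^d * of_nat (x choose d) * (K d :: complex))"
proof (cases x)
  case (Suc x')
  have summand: "(-1)^(Suc y) * of_nat (Suc x' choose Suc y) * f_lam lam (Suc y) * K (Suc y) +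
      of_nat (Suc x') * ((-1)^y * of_nat (x' choose y) * f_lam lam y * K (y + 1)) =
      (-(lam-1))^(Suc y) * of_nat (Suc x' choose Suc y) * K (Suc y)" for y
  proof -
    have choose: "of_nat (Suc x') * (of_nat (x' choose y) :: complex) =
        of_nat (Suc y) * of_nat (Suc x' choose Suc y)"
      by (metis Suc_times_binomial of_nat_mult)
    have ring: "(-A) * C * (s * F + M) * L + s' * (A * C' * F * L) = (-A * M) * C * L"
      if "s' * C' = s * C" for A C s F M L s' C' :: complex
    proof -
      have "s' * (A * C' * F * L) = A * F * L * (s' * C')"
        by (simp only: mult_ac)
      then have "s' * (A * C' * F * L) = A * F * L * (s * C)"
        using that by simp
      then show ?thesis
        by (simp add: algebra_simps)
    qed
    have "(-1::complex)^(Suc y) = - ((-1)^y)"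
      by simp
    moreover have "(-(lam-1))^(Suc y) = - ((-1)^y) * (lam-1)^(Suc y)"
      by (subst power_minus) simp
    then show ?thesis
      unfolding f_lam_Suc Suc_eq_plus1[symmetric] using ring[OF choose] by simp
  qed
  have "(\<Sum>y\<le>x. (-1)^y * of_nat (x choose y) * f_lam lam y * K y) =
      K 0 + (\<Sum>y\<le>x'. (-1)^(Suc y) * of_nat (Suc x' choose Suc y) * f_lam lam (Suc y) * K (Suc y))"
    unfolding Suc by (subst sum.atMost_Suc_shift) (simp del: binomial_Suc_Suc)
  moreover have "(\<Sum>d\<le>x. (-(lam-1))^d * of_nat (x choose d) * K d) =
      K 0 + (\<Sum>y\<le>x'. (-(lam-1))^(Suc y) * of_nat (Suc x' choose Suc y) * K (Suc y))"
    unfolding Suc by (subst sum.atMost_Suc_shift) (simp del: binomial_Suc_Suc power_Suc)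
  moreover have "of_nat x * (\<Sum>y\<le>x - 1. (-1)^y * of_nat ((x - 1) choose y) * f_lam lam y * K (y + 1)) =
      (\<Sum>y\<le>x'. of_nat (Suc x') * ((-1)^y * of_nat (x' choose y) * f_lam lam y * K (y + 1)))"
    unfolding Suc by (simp add: sum_distrib_left)
  ultimately show ?thesis
    using summand by (simp add: sum.distrib[symmetric] del: binomial_Suc_Suc power_Suc)
qed simp

lemma incl_excl_recurrence_general:
  "(\<Sum>e\<in>vectors_le (replicate (length a) 1).
      of_nat (prod_pow a e) * incl_excl lam (map2 (-) a e) (\<lambda>s. \<phi> (s + sum_list e))) =
   (\<Sum>d\<in>vectors_le a. (-(lam-1))^sum_list d * \<phi> (sum_list d) * (\<Prod>i<length a. of_nat (a!i choose d!i)))"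
proof (induction a arbitrary: \<phi>)
  case (Cons x a)
  let ?E = "vectors_le (replicate (length a) 1)"
  define K where "K t = (\<Sum>d\<in>vectors_le a. (-(lam-1))^sum_list d * \<phi> (t + sum_list d) *
      (\<Prod>i<length a. of_nat (a!i choose d!i)))" for t
  have IH: "(\<Sum>e\<in>?E. of_nat (prod_pow a e) * incl_excl lam (map2 (-) a e) (\<lambda>s. \<phi> (y + s + (k + sum_list e)))) =
      K (y + k)" for y k
    using Cons.IH[of "\<lambda>u. \<phi> (y + k + u)"] unfolding K_def by (simp add: ac_simps)
  have A: "(\<Sum>e\<in>?E. of_nat (x^k * prod_pow a e) *
        incl_excl lam ((x - k) # map2 (-) a e) (\<lambda>s. \<phi> (s + (k + sum_list e)))) =
      of_nat (x^k) * (\<Sum>y\<le>x - k. (-1)^y * of_nat ((x - k) choose y) * f_lam lam y * K (y + k))" for k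
    by (simp only: sum_incl_excl_Cons[where \<phi> = \<phi> and t = "\<lambda>e. k + sum_list e"] IH)
  have "(\<Sum>e\<in>vectors_le (replicate (length (x#a)) 1).
      of_nat (prod_pow (x#a) e) * incl_excl lam (map2 (-) (x#a) e) (\<lambda>s. \<phi> (s + sum_list e))) =
    (\<Sum>k\<le>1. \<Sum>e\<in>?E. of_nat (x^k * prod_pow a e) *
      incl_excl lam ((x - k) # map2 (-) a e) (\<lambda>s. \<phi> (s + (k + sum_list e))))"
    by (simp add: sum_vectors_le_Cons prod_pow_Cons)
  also have "\<dots> = (\<Sum>y\<le>x. (-1)^y * of_nat (x choose y) * f_lam lam y * K y) +
      of_nat x * (\<Sum>y\<le>x - 1. (-1)^y * of_nat ((x - 1) choose y) * f_lam lam y * K (y + 1))"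
    using A[of 0] A[of 1] by simp
  also have "\<dots> = (\<Sum>d\<le>x. (-(lam-1))^d * of_nat (x choose d) * K d)"
    by (rule single_block_identity)
  also have "\<dots> = (\<Sum>d\<in>vectors_le (x#a). (-(lam-1))^sum_list d * \<phi> (sum_list d) *
      (\<Prod>i<length (x#a). of_nat ((x#a)!i choose d!i)))"
    unfolding K_def
    by (simp only: sum_vectors_le_Cons prod_nth_Cons[of "\<lambda>u v. of_nat (u choose v)"] sum_list.Cons
        power_add sum_distrib_left) (simp add: algebra_simps)
  finally show ?case .
qed simp

lemma factorial_recurrence_incl_excl:
  "factorial_recurrence (\<lambda>a. incl_excl lam a (\<lambda>s. f_lam lam (sum_list a - s)))"
  unfolding factorial_recurrence_def
proof
  fix a :: "nat list"
  let ?n = "sum_list a"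
  let ?E = "vectors_le (replicate (length a) 1)"
  have "of_nat (prod_pow a e) * incl_excl lam (map2 (-) a e) (\<lambda>s. f_lam lam (sum_list (map2 (-) a e) - s)) =
      of_nat (prod_pow a e) * incl_excl lam (map2 (-) a e) (\<lambda>s. f_lam lam (?n - (s + sum_list e)))"
    if e: "e \<in> ?E" for e
  proof (cases "prod_pow a e = 0")
    case False
    then have "sum_list (map2 (-) a e) + sum_list e = ?n"
      using sum_list_map2_minus prod_pow_nonzero_le[OF e] e by (simp add: vectors_le_def)
    then have "sum_list (map2 (-) a e) - s = ?n - (s + sum_list e)" for s
      by simp
    then show ?thesis
      by simp
  qed simp
  then have "(\<Sum>e\<in>?E. of_nat (prod_pow a e) *
      incl_excl lam (map2 (-) a e) (\<lambda>s. f_lam lam (sum_list (map2 (-) a e) - s))) =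
    (\<Sum>e\<in>?E. of_nat (prod_pow a e) * incl_excl lam (map2 (-) a e) (\<lambda>s. f_lam lam (?n - (s + sum_list e))))"
    by (rule sum.cong[OF refl])
  also have "\<dots> = (\<Sum>d\<in>vectors_le a. (-(lam-1))^sum_list d * f_lam lam (?n - sum_list d) *
      (\<Prod>i<length a. of_nat (a!i choose d!i)))"
    by (rule incl_excl_recurrence_general)
  also have "\<dots> = (\<Sum>j\<le>?n. of_nat (?n choose j) * ((-(lam-1))^j * f_lam lam (?n - j)))"
    using sum_vectors_le_prod_choose[of "\<lambda>j. (-(lam-1))^j * f_lam lam (?n - j)" a] by (simp add: ac_simps)
  also have "\<dots> = fact ?n"
    by (rule sum_binomial_f_lam_alternating)
  finally show "(\<Sum>e\<in>?E. of_nat (prod_pow a e) *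
      incl_excl lam (map2 (-) a e) (\<lambda>s. f_lam lam (sum_list (map2 (-) a e) - s))) = fact ?n" .
qed

theorem mainTheorem2:
  fixes a :: "nat list" and lam :: complex
  shows "of_nat (card {p. p permutes {1..sum_list a} \<and> Phi a p \<in> D_a a}) =
    (\<Sum>b\<in>{b. length b = length a \<and> (\<forall>i<length a. b ! i \<le> a ! i)}.
       (-1) ^ sum_list b * f_lam lam (sum_list a - sum_list b) *
       (\<Prod>i<length a. of_nat (a ! i choose b ! i) * f_lam lam (b ! i)))"
proof -
  have "card {p. p permutes {1..sum_list a} \<and> Phi a p \<in> D_a a} = count_free a"
    unfolding count_free_def Phi_in_D_a_iff ..
  also have "(of_nat (count_free a) :: complex) = incl_excl lam a (\<lambda>s. f_lam lam (sum_list a - s))"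
    using factorial_recurrence_unique[OF factorial_recurrence_count_free factorial_recurrence_incl_excl] .
  finally show ?thesis
    by (simp add: incl_excl_def vectors_le_def)
qed

end
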